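(* Let $n\ge 2$ and $d\ge n+1$. For every Perazzo form $f$ of degree $d$ in $S$, the $h$-vector of $A_f$ satisfies $$h_i(A_f)\ \ge\ \min(2n+2,\ d+2,\ n+2+i)\quad\text{for }1\le i\le\lfloor d/2\rfloor,$$ (and $h_i=h_{d-i}$). Moreover this bound is attained: for $f=x_0u^{d-1}+x_1u^{d-2}v+\cdots+x_nu^{d-1-n}v^n$ one has $h_i(A_f)=\min(2n+2,d+2,n+2+i)$ for all $1\le i\le\lfloor d/2\rfloor$. Thus the componentwise minimum $h$-vector of $A_f$ over all Perazzo forms of degree $d$ is $h_i=\min(2n+2,d+2,n+2+i)$ for $1\le i\le \lfloor d/2\rfloor$, extended by symmetry $h_i=h_{d-i}$, with $h_0=h_d=1$.
   Context: $K$ is an algebraically closed field of characteristic zero. $S=K[x_0,\dots,x_n,u,v]$ and $R=K[y_0,\dots,y_n,U,V]$ acts on $S$ by differentiation ($y_i=\partial/\partial x_i$, $U=\partial/\partial u$, $V=\partial/\partial v$); write $\theta\circ f$ for this action. A Perazzo form of degree $d$ is $f=x_0p_0+x_1p_1+\cdots+x_np_n+g$ where $p_0,\dots,p_n\in K[u,v]_{d-1}$ are linearly independent but algebraically dependent forms and $g\in K[u,v]_d$. $\operatorname{Ann}_R(f)=\{\theta\in R:\theta\circ f=0\}$ and $A_f=R/\operatorname{Ann}_R(f)$ is a graded artinian Gorenstein algebra of socle degree $d$; its $h$-vector is $h_i=\dim_K [A_f]_i$, which equals the dimension of the $K$-span of all order-$i$ partial derivatives of $f$, and satisfies $h_i=h_{d-i}$.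 *)

theory Defs
  imports "HOL-Library.Poly_Mapping" "HOL-Computational_Algebra.Polynomial"
begin

text \<open>Polynomials in the variables indexed by natural numbers, over a field 'k.
  In S = K[x_0,...,x_n,u,v] the variable x_j is index j (j \<le> n),
  u is index n+1 and v is index n+2.\<close>

type_synonym 'k mpoly = "(nat \<Rightarrow>\<^sub>0 nat) \<Rightarrow>\<^sub>0 'k"

definition mdeg :: "(nat \<Rightarrow>\<^sub>0 nat) \<Rightarrow> nat" where
  "mdeg m = sum (Poly_Mapping.lookup m) (Poly_Mapping.keys m)"

definition homog_of :: "nat \<Rightarrow> 'k::zero mpoly \<Rightarrow> bool" where
  "homog_of e p \<longleftrightarrow> (\<forall>m\<in>Poly_Mapping.keys p. mdeg m = e)"

definition only_vars :: "nat set \<Rightarrow> 'k::zero mpoly \<Rightarrow> bool" where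
  "only_vars V p \<longleftrightarrow> (\<forall>m\<in>Poly_Mapping.keys p. Poly_Mapping.keys m \<subseteq> V)"

definition in_uv_forms :: "nat \<Rightarrow> nat \<Rightarrow> 'k::zero mpoly \<Rightarrow> bool" where
  "in_uv_forms n e p \<longleftrightarrow> only_vars {n+1, n+2} p \<and> homog_of e p"

definition mvar :: "nat \<Rightarrow> 'k::{zero,one} mpoly" where
  "mvar j = Poly_Mapping.single (Poly_Mapping.single j 1) 1"

definition mconst :: "'k::zero \<Rightarrow> 'k mpoly" where
  "mconst c = Poly_Mapping.single 0 c"

definition mscale :: "'k::field \<Rightarrow> 'k mpoly \<Rightarrow> 'k mpoly" where
  "mscale c p = Poly_Mapping.map (\<lambda>a. c * a) p"

definition msubst :: "(nat \<Rightarrow> 'k::comm_ring_1 mpoly) \<Rightarrow> 'k mpoly \<Rightarrow> 'k mpoly" where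
  "msubst \<sigma> F = (\<Sum>m\<in>Poly_Mapping.keys F. mconst (Poly_Mapping.lookup F m) * (\<Prod>j\<in>Poly_Mapping.keys m. \<sigma> j ^ Poly_Mapping.lookup m j))"

definition pdiff :: "nat \<Rightarrow> 'k::comm_ring_1 mpoly \<Rightarrow> 'k mpoly" where
  "pdiff j f = (\<Sum>m\<in>Poly_Mapping.keys f. Poly_Mapping.single (m - Poly_Mapping.single j 1)
                                (of_nat (Poly_Mapping.lookup m j) * Poly_Mapping.lookup f m))"

fun partials :: "nat \<Rightarrow> 'k::comm_ring_1 mpoly \<Rightarrow> 'k mpoly set" where
  "partials 0 f = {f}"
| "partials (Suc i) f = {pdiff j g | j g. g \<in> partials i f}"

text \<open>h_i(A_f) = dimension of the K-span of all order-i partial derivatives of f.\<close>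
definition hvec :: "'k::field mpoly \<Rightarrow> nat \<Rightarrow> nat" where
  "hvec f i = vector_space.dim mscale (partials i f)"

definition lin_indep_forms :: "nat \<Rightarrow> (nat \<Rightarrow> 'k::comm_ring_1 mpoly) \<Rightarrow> bool" where
  "lin_indep_forms n p \<longleftrightarrow>
     (\<forall>c. (\<Sum>j\<le>n. mconst (c j) * p j) = 0 \<longrightarrow> (\<forall>j\<le>n. c j = 0))"

definition alg_dep_forms :: "nat \<Rightarrow> (nat \<Rightarrow> 'k::comm_ring_1 mpoly) \<Rightarrow> bool" where
  "alg_dep_forms n p \<longleftrightarrow>
     (\<exists>F. F \<noteq> 0 \<and> only_vars {..n} F \<and> msubst p F = 0)"

definition perazzo_form :: "nat \<Rightarrow> nat \<Rightarrow> 'k::comm_ring_1 mpoly \<Rightarrow> bool" where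
  "perazzo_form n d f \<longleftrightarrow>
     (\<exists>p g. (\<forall>j\<le>n. in_uv_forms n (d - 1) (p j)) \<and>
            lin_indep_forms n p \<and> alg_dep_forms n p \<and>
            in_uv_forms n d g \<and>
            f = (\<Sum>j\<le>n. mvar j * p j) + g)"

definition alg_closed :: "'k::field itself \<Rightarrow> bool" where
  "alg_closed _ \<longleftrightarrow> (\<forall>q::'k poly. Polynomial.degree q > 0 \<longrightarrow> (\<exists>x. poly q x = 0))"

end

theory Submission
  imports Defs
begin

(*
  Write f = x_0 p_0 + ... + x_n p_n + g. The x-derivatives of f are the p_j, which span an
  (n+1)-dimensional space P of binary forms of degree d-1; Gaussian elimination with respect to
  the v-degree yields a set T of at least n+1 distinct leading v-exponents of elements of P.

  For 1 <= i < d two families of order-i derivatives are jointly linearly independent: the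
  derivatives d_u^a d_v^b of leaders of P, one for every v-exponent s <= d-i lying at most i-1
  below an element of T, and the derivatives d_u^(i-b) d_v^b f, one for every b <= i lying at most
  d-1-i below an element of T. Differentiating by x_j kills the first family and turns a relation
  of the second into a relation among derivatives of p_j, hence of every element of P; in both
  families distinct members have distinct leading v-exponents. Mapping the j-th smallest element
  of T to a suitable index shows that the two index sets have at least min(|T|, d-i+1) and
  min(|T|, i+1) elements, so h_i >= min(n+1, d-i+1) + min(n+1, i+1), which is the stated bound
  when i <= d/2.

  In the example all p_j (and g = 0) have v-degree at most n. Then every order-i derivative lies
  in the span of the d_u^(i-b) d_v^b f with b <= min(n, i) and the monomials u^(d-i-s) v^s with
  s <= min(n, d-i), giving the matching upper bound.
*)

lemma lookup_mscale [simp]: "Poly_Mapping.lookup (mscale c p) m = c * Poly_Mapping.lookup p m"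
  by (simp add: mscale_def Poly_Mapping.map.rep_eq when_def)

interpretation mpoly: vector_space "mscale :: 'k::field \<Rightarrow> 'k mpoly \<Rightarrow> 'k mpoly"
  by unfold_locales (auto intro!: poly_mapping_eqI simp: lookup_add algebra_simps)

lemma mconst_mult: "mconst c * p = mscale c p"
  by (simp add: mconst_def mscale_def mult_map_scale_conv_mult)

context vector_space
begin

lemma card_le_dim_if_independent_family:
  assumes "finite S" and "finite I" and "w ` I \<subseteq> span S"
    and indep: "\<And>c. (\<Sum>x\<in>I. c x *s w x) = 0 \<Longrightarrow> \<forall>x\<in>I. c x = 0"
  shows "card I \<le> dim S"
proof -
  have inj: "inj_on w I"
  proof (rule inj_onI, rule ccontr)
    fix x y assume xy: "x \<in> I" "y \<in> I" "w x = w y" "x \<noteq> y"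
    define c where "c z = (if z = x then 1 else if z = y then -1 else (0::'a))" for z
    have "(\<Sum>z\<in>I. c z *s w z) = (\<Sum>z\<in>{x, y}. c z *s w z)"
      using assms(2) xy by (intro sum.mono_neutral_right) (auto simp: c_def)
    also have "\<dots> = 0"
      using xy by (simp add: c_def)
    finally have "c x = 0"
      using indep xy(1) by blast
    then show False
      by (simp add: c_def)
  qed
  have "independent (w ` I)"
  proof (rule independent_if_scalars_zero)
    fix u v assume u: "(\<Sum>v\<in>w ` I. u v *s v) = 0" and "v \<in> w ` I"
    then obtain x where "x \<in> I" "v = w x"
      by blast
    have "(\<Sum>x\<in>I. u (w x) *s w x) = 0"
      using u by (simp add: sum.reindex[OF inj])
    then have "\<forall>x\<in>I. u (w x) = 0"
      by (rule indep)
    then show "u v = 0"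
      using \<open>x \<in> I\<close> \<open>v = w x\<close> by blast
  qed (use assms(2) in simp)
  moreover obtain B where B: "B \<subseteq> S" "S \<subseteq> span B" "card B = dim S"
    by (rule basis_exists)
  moreover have "w ` I \<subseteq> span B"
    using assms(3) B(2) by (metis span_mono span_span subset_trans)
  ultimately have "card (w ` I) \<le> dim S"
    using independent_span_bound[of B "w ` I"] assms(1) finite_subset by metis
  then show ?thesis
    by (simp add: card_image[OF inj])
qed

lemma card_add_card_le_dim_if_independent_families:
  assumes "finite S" and "finite I" and "finite J"
    and "u ` I \<subseteq> span S" and "w ` J \<subseteq> span S"
    and indep: "\<And>a b. (\<Sum>x\<in>I. a x *s u x) + (\<Sum>y\<in>J. b y *s w y) = 0 \<Longrightarrow>
                       (\<forall>x\<in>I. a x = 0) \<and> (\<forall>y\<in>J. b y = 0)"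
  shows "card I + card J \<le> dim S"
proof -
  define K where "K = Inl ` I \<union> Inr ` J"
  have sum_K: "(\<Sum>z\<in>K. c z *s case_sum u w z) =
      (\<Sum>x\<in>I. c (Inl x) *s u x) + (\<Sum>y\<in>J. c (Inr y) *s w y)" for c
  proof -
    have "(\<Sum>z\<in>K. c z *s case_sum u w z) =
        (\<Sum>z\<in>Inl ` I. c z *s case_sum u w z) + (\<Sum>z\<in>Inr ` J. c z *s case_sum u w z)"
      unfolding K_def using assms(2,3) by (intro sum.union_disjoint) auto
    then show ?thesis
      by (simp add: sum.reindex)
  qed
  have "card K \<le> dim S"
  proof (rule card_le_dim_if_independent_family[OF assms(1)])
    show "finite K" and "case_sum u w ` K \<subseteq> span S"
      unfolding K_def using assms(2-5) by auto
    fix c assume "(\<Sum>z\<in>K. c z *s case_sum u w z) = 0"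
    then have "(\<Sum>x\<in>I. c (Inl x) *s u x) + (\<Sum>y\<in>J. c (Inr y) *s w y) = 0"
      by (simp only: sum_K)
    then have "(\<forall>x\<in>I. c (Inl x) = 0) \<and> (\<forall>y\<in>J. c (Inr y) = 0)"
      by (rule indep)
    then show "\<forall>z\<in>K. c z = 0"
      by (auto simp: K_def)
  qed
  moreover have "card K = card I + card J"
    unfolding K_def using assms(2,3) by (subst card_Un_disjoint) (auto simp: card_image)
  ultimately show ?thesis
    by simp
qed

end

lemma card_hit_windows_ge:
  fixes T :: "nat set"
  assumes "finite T" and "T \<subseteq> {..e}" and "c \<le> e"
  shows "min (card T) (c + 1) \<le> card {b. b \<le> c \<and> (\<exists>t\<in>T. b \<le> t \<and> t \<le> b + (e - c))}"
proof -
  define xs where "xs = sorted_list_of_set T"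
  have sorted: "sorted_wrt (<) xs" and len: "length xs = card T" and set: "set xs = T"
    using assms(1) by (simp_all add: xs_def strict_sorted_list_of_set)
  define r where "r = min (card T) (c + 1)"
  define \<beta> where "\<beta> j = max j (xs ! j - (e - c))" for j
  have "\<beta> j < \<beta> j'" if "j < j'" "j' < length xs" for j j'
    using sorted_wrt_nth_less[OF sorted that] that unfolding \<beta>_def by auto
  then have "strict_mono_on {..<r} \<beta>"
    by (auto simp: strict_mono_on_def r_def len)
  then have "card (\<beta> ` {..<r}) = r"
    by (simp add: card_image strict_mono_on_imp_inj_on)
  moreover have "\<beta> ` {..<r} \<subseteq> {b. b \<le> c \<and> (\<exists>t\<in>T. b \<le> t \<and> t \<le> b + (e - c))}"
  proof clarify
    fix j assume "j < r"
    then have j: "j < length xs" "j \<le> c"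
      by (auto simp: r_def len)
    then have "xs ! j \<in> T" and "j \<le> xs ! j"
      using set nth_mem sorted_wrt_less_idx[OF sorted] by auto
    with j assms(2,3) show "\<beta> j \<le> c \<and> (\<exists>t\<in>T. \<beta> j \<le> t \<and> t \<le> \<beta> j + (e - c))"
      unfolding \<beta>_def by (intro conjI bexI[of _ "xs ! j"]) auto
  qed
  then have "card (\<beta> ` {..<r}) \<le> card {b. b \<le> c \<and> (\<exists>t\<in>T. b \<le> t \<and> t \<le> b + (e - c))}"
    by (intro card_mono) auto
  ultimately show ?thesis
    by (simp add: r_def)
qed

section \<open>Partial derivatives\<close>

lemma eq_single_add_iff:
  fixes k m :: "nat \<Rightarrow>\<^sub>0 nat"
  shows "k = Poly_Mapping.single j 1 + m \<longleftrightarrow>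
         Poly_Mapping.lookup k j \<noteq> 0 \<and> m = k - Poly_Mapping.single j 1"
proof
  assume "Poly_Mapping.lookup k j \<noteq> 0 \<and> m = k - Poly_Mapping.single j 1"
  then show "k = Poly_Mapping.single j 1 + m"
    by (auto intro!: poly_mapping_eqI simp: lookup_add lookup_minus lookup_single when_def)
qed (simp add: lookup_add)

lemma mpoly_eq_sum_monomials:
  "q = (\<Sum>m\<in>Poly_Mapping.keys q. Poly_Mapping.single m (Poly_Mapping.lookup q m))"
  by (rule poly_mapping_eqI) (simp add: lookup_sum lookup_single when_def in_keys_iff)

lemma mdeg_eq_sum:
  assumes "finite V" and "Poly_Mapping.keys m \<subseteq> V"
  shows "mdeg m = sum (Poly_Mapping.lookup m) V"
  unfolding mdeg_def using assms by (intro sum.mono_neutral_left) (auto simp: in_keys_iff)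

lemma mdeg_add: "mdeg (m + m') = mdeg m + mdeg m'"
proof -
  let ?V = "Poly_Mapping.keys m \<union> Poly_Mapping.keys m'"
  have "Poly_Mapping.keys (m + m') \<subseteq> ?V"
    by (rule keys_add)
  then show ?thesis
    by (simp add: mdeg_eq_sum[of ?V] lookup_add sum.distrib)
qed

lemma mdeg_single [simp]: "mdeg (Poly_Mapping.single j a) = a"
  by (simp add: mdeg_eq_sum[of "{j}"])

lemma lookup_mvar_mult:
  "Poly_Mapping.lookup (mvar k * (q :: 'k::comm_ring_1 mpoly)) m =
    (if Poly_Mapping.lookup m k = 0 then 0
     else Poly_Mapping.lookup q (m - Poly_Mapping.single k 1))"
proof -
  have "Poly_Mapping.lookup (mvar k * q) m =
      (\<Sum>m'. Poly_Mapping.lookup q m' when m = Poly_Mapping.single k 1 + m')"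
    unfolding mvar_def lookup_mult lookup_single when_mult by (simp add: when_def)
  also have "\<dots> = (\<Sum>m'. if m' = m - Poly_Mapping.single k 1 then
       (if Poly_Mapping.lookup m k = 0 then 0 else Poly_Mapping.lookup q m') else 0)"
    by (rule Sum_any.cong) (unfold when_def eq_single_add_iff, auto)
  finally show ?thesis
    by simp
qed

lemma lookup_pdiff:
  "Poly_Mapping.lookup (pdiff j f) m =
     of_nat (Poly_Mapping.lookup m j + 1) * Poly_Mapping.lookup f (m + Poly_Mapping.single j 1)"
proof -
  have "Poly_Mapping.lookup (pdiff j f) m =
     (\<Sum>k\<in>Poly_Mapping.keys f. (of_nat (Poly_Mapping.lookup k j) * Poly_Mapping.lookup f k
        when k - Poly_Mapping.single j 1 = m))"
    by (simp add: pdiff_def lookup_sum lookup_single)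
  also have "\<dots> = (\<Sum>k\<in>Poly_Mapping.keys f. if k = Poly_Mapping.single j 1 + m then
       of_nat (Poly_Mapping.lookup k j) * Poly_Mapping.lookup f k else 0)"
  proof (rule sum.cong)
    fix k
    show "(of_nat (Poly_Mapping.lookup k j) * Poly_Mapping.lookup f k
        when k - Poly_Mapping.single j 1 = m) = (if k = Poly_Mapping.single j 1 + m then
       of_nat (Poly_Mapping.lookup k j) * Poly_Mapping.lookup f k else 0)"
      using eq_single_add_iff[of k j m]
      by (cases "Poly_Mapping.lookup k j = 0") (auto simp: when_def)
  qed simp
  also have "\<dots> = of_nat (Poly_Mapping.lookup m j + 1) *
      Poly_Mapping.lookup f (m + Poly_Mapping.single j 1)"
    by (simp add: lookup_add in_keys_iff add.commute)
  finally show ?thesis .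
qed

lemma keys_pdiff:
  "m \<in> Poly_Mapping.keys (pdiff j q) \<Longrightarrow> m + Poly_Mapping.single j 1 \<in> Poly_Mapping.keys q"
  by (metis in_keys_iff lookup_pdiff mult_zero_right)

lemma pdiff_zero [simp]: "pdiff j 0 = 0"
  by (rule poly_mapping_eqI) (simp add: lookup_pdiff)

lemma pdiff_add: "pdiff j (p + q) = pdiff j p + pdiff j q"
  by (rule poly_mapping_eqI) (simp add: lookup_pdiff lookup_add algebra_simps)

lemma pdiff_mscale: "pdiff j (mscale c q) = mscale c (pdiff j q)"
  by (rule poly_mapping_eqI) (simp add: lookup_pdiff algebra_simps)

lemma pdiff_sum: "pdiff j (sum F A) = (\<Sum>x\<in>A. pdiff j (F x))"
  by (rule poly_mapping_eqI) (simp add: lookup_pdiff lookup_sum sum_distrib_left)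

lemma pdiff_commute: "pdiff j (pdiff l q) = pdiff l (pdiff j q)"
  by (rule poly_mapping_eqI)
    (auto simp: lookup_pdiff lookup_add lookup_single when_def algebra_simps)

lemma pdiff_power_commute: "pdiff l ((pdiff j ^^ a) q) = (pdiff j ^^ a) (pdiff l q)"
  by (induct a) (simp_all add: pdiff_commute)

lemma lookup_pdiff_power:
  "Poly_Mapping.lookup ((pdiff j ^^ a) q) m =
     of_nat (pochhammer (Poly_Mapping.lookup m j + 1) a) *
     Poly_Mapping.lookup q (m + Poly_Mapping.single j a)"
proof (induct a arbitrary: m)
  case (Suc a)
  have "Poly_Mapping.lookup ((pdiff j ^^ Suc a) q) m =
      of_nat (Poly_Mapping.lookup m j + 1) * (of_nat (pochhammer (Poly_Mapping.lookup m j + 2) a) *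
      Poly_Mapping.lookup q (m + Poly_Mapping.single j 1 + Poly_Mapping.single j a))"
    by (simp add: lookup_pdiff Suc lookup_add)
  then show ?case
    by (simp add: pochhammer_rec add.assoc add.commute[of 1 a] ring_distribs
        single_add[symmetric] del: single_add)
qed simp

lemma pdiff_in_span_image: "x \<in> mpoly.span S \<Longrightarrow> pdiff j x \<in> mpoly.span (pdiff j ` S)"
proof (induct rule: mpoly.span_induct_alt)
  case (step c x y)
  then show ?case
    by (simp add: pdiff_add pdiff_mscale mpoly.span_add mpoly.span_scale mpoly.span_base)
qed (simp add: mpoly.span_zero)

lemma pdiff_in_span_partials:
  "g \<in> mpoly.span (partials k f) \<Longrightarrow> pdiff j g \<in> mpoly.span (partials (Suc k) f)"
proof -
  assume "g \<in> mpoly.span (partials k f)"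
  moreover have "pdiff j ` partials k f \<subseteq> partials (Suc k) f"
    by auto
  ultimately show ?thesis
    using pdiff_in_span_image mpoly.span_mono by blast
qed

lemma pdiff_power_in_span_partials:
  "g \<in> mpoly.span (partials k f) \<Longrightarrow> (pdiff j ^^ a) g \<in> mpoly.span (partials (k + a) f)"
  by (induct a) (simp_all add: pdiff_in_span_partials del: partials.simps)

lemma lookup_eq_0_if_only_vars:
  assumes "only_vars V q" and "j \<notin> V" and "Poly_Mapping.lookup m j \<noteq> 0"
  shows "Poly_Mapping.lookup q m = 0"
  by (metis assms in_keys_iff only_vars_def subsetD)

lemma pdiff_eq_0_if_only_vars:
  assumes "only_vars V q" and "j \<notin> V"
  shows "pdiff j q = 0"
  by (rule poly_mapping_eqI)
    (simp add: lookup_pdiff lookup_eq_0_if_only_vars[OF assms] lookup_add)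

lemma only_vars_pdiff:
  assumes "only_vars V q"
  shows "only_vars V (pdiff j q)"
  unfolding only_vars_def
proof
  fix m assume "m \<in> Poly_Mapping.keys (pdiff j q)"
  then have "Poly_Mapping.keys (m + Poly_Mapping.single j 1) \<subseteq> V"
    using assms keys_pdiff by (auto simp: only_vars_def)
  moreover have "Poly_Mapping.keys m \<subseteq> Poly_Mapping.keys (m + Poly_Mapping.single j 1)"
    by (auto simp: in_keys_iff lookup_add)
  ultimately show "Poly_Mapping.keys m \<subseteq> V"
    by blast
qed

lemma only_vars_partials: "only_vars V f \<Longrightarrow> g \<in> partials k f \<Longrightarrow> only_vars V g"
  by (induct k arbitrary: g) (auto intro: only_vars_pdiff)

lemma finite_partials: "finite (partials k f)"
proof (induct k)
  case (Suc k)
  define V where "V = \<Union> (Poly_Mapping.keys ` Poly_Mapping.keys f)"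
  have "only_vars V f"
    unfolding V_def only_vars_def by auto
  have "partials (Suc k) f \<subseteq> insert 0 ((\<lambda>(j, g). pdiff j g) ` (V \<times> partials k f))"
  proof
    fix h assume "h \<in> partials (Suc k) f"
    then obtain j g where h: "h = pdiff j g" and g: "g \<in> partials k f"
      by auto
    show "h \<in> insert 0 ((\<lambda>(j, g). pdiff j g) ` (V \<times> partials k f))"
    proof (cases "j \<in> V")
      case False
      then have "h = 0"
        using h pdiff_eq_0_if_only_vars only_vars_partials[OF \<open>only_vars V f\<close> g] by blast
      then show ?thesis
        by simp
    qed (use h g in auto)
  qed
  moreover have "finite V"
    unfolding V_def by auto
  ultimately show ?case
    using Suc by (auto intro: finite_subset)
qed simp

lemma pdiff_mvar_mult:
  assumes "only_vars V q" and "j \<notin> V"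
  shows "pdiff j (mvar k * q) = (if k = j then q else 0)"
proof (rule poly_mapping_eqI)
  fix m
  show "Poly_Mapping.lookup (pdiff j (mvar k * q)) m =
        Poly_Mapping.lookup (if k = j then q else 0) m"
  proof (cases "k = j")
    case True
    then show ?thesis
      using lookup_eq_0_if_only_vars[OF assms, of m]
      by (cases "Poly_Mapping.lookup m j = 0") (simp_all add: lookup_pdiff lookup_mvar_mult lookup_add)
  next
    case False
    have "Poly_Mapping.lookup (m + Poly_Mapping.single j 1 - Poly_Mapping.single k 1) j \<noteq> 0"
      using False by (simp add: lookup_minus lookup_add lookup_single)
    then show ?thesis
      using False lookup_eq_0_if_only_vars[OF assms]
      by (simp add: lookup_pdiff lookup_mvar_mult lookup_add)
  qed
qed

lemma pdiff_perazzo: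
  assumes "\<And>k. k \<le> n \<Longrightarrow> only_vars {n+1, n+2} (p k)" and "only_vars {n+1, n+2} g"
    and "j \<notin> {n+1, n+2}"
  shows "pdiff j ((\<Sum>k\<le>n. mvar k * p k) + g) = (if j \<le> n then p j else 0)"
proof -
  have "(\<Sum>k\<le>n. pdiff j (mvar k * p k)) = (\<Sum>k\<le>n. if k = j then p k else 0)"
    using assms(1,3) by (intro sum.cong refl pdiff_mvar_mult) auto
  then show ?thesis
    using assms(2,3) by (simp add: pdiff_add pdiff_sum pdiff_eq_0_if_only_vars)
qed

definition var_degree_le :: "nat \<Rightarrow> nat \<Rightarrow> 'k::zero mpoly \<Rightarrow> bool" where
  "var_degree_le j t q \<longleftrightarrow> (\<forall>m\<in>Poly_Mapping.keys q. Poly_Mapping.lookup m j \<le> t)"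

lemma var_degree_le_zero [simp]: "var_degree_le j t 0"
  by (simp add: var_degree_le_def)

lemma var_degree_le_mono: "var_degree_le j t q \<Longrightarrow> t \<le> t' \<Longrightarrow> var_degree_le j t' q"
  by (auto simp: var_degree_le_def)

lemma var_degree_le_add:
  "var_degree_le j t p \<Longrightarrow> var_degree_le j t q \<Longrightarrow> var_degree_le j t (p + q)"
  using keys_add[of p q] by (auto simp: var_degree_le_def)

lemma var_degree_le_sum:
  "(\<And>x. x \<in> A \<Longrightarrow> var_degree_le j t (F x)) \<Longrightarrow> var_degree_le j t (sum F A)"
  using keys_sum[of F A] by (fastforce simp: var_degree_le_def)

lemma var_degree_le_mvar_mult:
  assumes "var_degree_le j t q" and "k \<noteq> j"
  shows "var_degree_le j t (mvar k * (q :: 'k::comm_ring_1 mpoly))"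
  unfolding var_degree_le_def
proof
  fix m assume "m \<in> Poly_Mapping.keys (mvar k * q)"
  then have "m - Poly_Mapping.single k 1 \<in> Poly_Mapping.keys q"
    by (auto simp: in_keys_iff lookup_mvar_mult split: if_splits)
  then have "Poly_Mapping.lookup (m - Poly_Mapping.single k 1) j \<le> t"
    using assms(1) by (auto simp: var_degree_le_def)
  then show "Poly_Mapping.lookup m j \<le> t"
    using assms(2) by (simp add: lookup_minus lookup_single)
qed

lemma lookup_eq_0_if_var_degree_le:
  "var_degree_le j t q \<Longrightarrow> t < Poly_Mapping.lookup m j \<Longrightarrow> Poly_Mapping.lookup q m = 0"
  unfolding var_degree_le_def by (metis in_keys_iff not_le)

lemma var_degree_le_pdiff:
  assumes "var_degree_le j t q"
  shows "var_degree_le j t (pdiff l q)"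
  unfolding var_degree_le_def
proof
  fix m assume "m \<in> Poly_Mapping.keys (pdiff l q)"
  then have "Poly_Mapping.lookup (m + Poly_Mapping.single l 1) j \<le> t"
    using assms keys_pdiff by (auto simp: var_degree_le_def)
  then show "Poly_Mapping.lookup m j \<le> t"
    by (simp add: lookup_add)
qed

lemma in_uv_forms_zero [simp]: "in_uv_forms n e 0"
  by (simp add: in_uv_forms_def only_vars_def homog_of_def)

lemma in_uv_forms_span:
  assumes "\<And>x. x \<in> S \<Longrightarrow> in_uv_forms n e x" and "q \<in> mpoly.span S"
  shows "in_uv_forms n e q"
  using assms(2)
proof (induct rule: mpoly.span_induct_alt)
  case (step c x y)
  have "Poly_Mapping.keys (mscale c x + y) \<subseteq> Poly_Mapping.keys x \<union> Poly_Mapping.keys y"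
    by (auto simp: in_keys_iff lookup_add)
  with step assms(1) show ?case
    unfolding in_uv_forms_def only_vars_def homog_of_def by blast
qed simp

lemma in_uv_forms_pdiff:
  assumes "in_uv_forms n e q"
  shows "in_uv_forms n (e - 1) (pdiff j q)"
proof -
  have "mdeg m = e - 1" if "m \<in> Poly_Mapping.keys (pdiff j q)" for m
    using assms keys_pdiff[OF that] by (auto simp: in_uv_forms_def homog_of_def mdeg_add)
  then show ?thesis
    using assms only_vars_pdiff by (auto simp: in_uv_forms_def homog_of_def)
qed

definition uv_monom :: "nat \<Rightarrow> nat \<Rightarrow> nat \<Rightarrow> (nat \<Rightarrow>\<^sub>0 nat)" where
  "uv_monom n a b = Poly_Mapping.single (n+1) a + Poly_Mapping.single (n+2) b"

definition uv_diff :: "nat \<Rightarrow> nat \<Rightarrow> nat \<Rightarrow> 'k::comm_ring_1 mpoly \<Rightarrow> 'k mpoly" where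
  "uv_diff n a b q = (pdiff (n+1) ^^ a) ((pdiff (n+2) ^^ b) q)"

lemma lookup_uv_monom [simp]:
  "Poly_Mapping.lookup (uv_monom n a b) j = (if j = n+1 then a else if j = n+2 then b else 0)"
  by (simp add: uv_monom_def lookup_add lookup_single)

lemma uv_monom_eq_iff [simp]: "uv_monom n a b = uv_monom n a' b' \<longleftrightarrow> a = a' \<and> b = b'"
proof
  assume "uv_monom n a b = uv_monom n a' b'"
  from arg_cong[OF this, of "\<lambda>m. (Poly_Mapping.lookup m (n+1), Poly_Mapping.lookup m (n+2))"]
  show "a = a' \<and> b = b'"
    by simp
qed simp

lemma uv_monom_add: "uv_monom n a b + uv_monom n a' b' = uv_monom n (a + a') (b + b')"
  by (rule poly_mapping_eqI) (simp add: lookup_add)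

lemma mdeg_uv_monom [simp]: "mdeg (uv_monom n a b) = a + b"
  by (simp add: uv_monom_def mdeg_add)

lemma lookup_uv_diff:
  "Poly_Mapping.lookup (uv_diff n a b q) m =
     of_nat (pochhammer (Poly_Mapping.lookup m (n+1) + 1) a) *
     of_nat (pochhammer (Poly_Mapping.lookup m (n+2) + 1) b) *
     Poly_Mapping.lookup q (m + uv_monom n a b)"
  by (simp add: uv_diff_def lookup_pdiff_power lookup_add lookup_single uv_monom_def add.assoc)

lemma keys_uv_diff:
  "m \<in> Poly_Mapping.keys (uv_diff n a b q) \<Longrightarrow> m + uv_monom n a b \<in> Poly_Mapping.keys q"
  by (metis in_keys_iff lookup_uv_diff mult_zero_right)

lemma uv_diff_zero [simp]: "uv_diff n a b 0 = 0"
  by (rule poly_mapping_eqI) (simp add: lookup_uv_diff)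

lemma uv_diff_add: "uv_diff n a b (p + q) = uv_diff n a b p + uv_diff n a b q"
  by (rule poly_mapping_eqI) (simp add: lookup_uv_diff lookup_add algebra_simps)

lemma uv_diff_mscale: "uv_diff n a b (mscale c q) = mscale c (uv_diff n a b q)"
  by (rule poly_mapping_eqI) (simp add: lookup_uv_diff algebra_simps)

lemma pdiff_uv_diff: "pdiff j (uv_diff n a b q) = uv_diff n a b (pdiff j q)"
  by (simp add: uv_diff_def pdiff_power_commute)

lemma pdiff_u_uv_diff: "pdiff (n+1) (uv_diff n a b q) = uv_diff n (Suc a) b q"
  by (simp add: uv_diff_def)

lemma pdiff_v_uv_diff: "pdiff (n+2) (uv_diff n a b q) = uv_diff n a (Suc b) q"
  by (simp add: uv_diff_def pdiff_power_commute)

lemma uv_diff_in_span_partials: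
  "q \<in> mpoly.span (partials k f) \<Longrightarrow> uv_diff n a b q \<in> mpoly.span (partials (k + b + a) f)"
  unfolding uv_diff_def by (intro pdiff_power_in_span_partials)

lemma only_vars_uv_diff:
  assumes "only_vars V q"
  shows "only_vars V (uv_diff n a b q)"
  unfolding only_vars_def
proof
  fix m assume "m \<in> Poly_Mapping.keys (uv_diff n a b q)"
  then have "m + uv_monom n a b \<in> Poly_Mapping.keys q"
    by (rule keys_uv_diff)
  then have "Poly_Mapping.keys (m + uv_monom n a b) \<subseteq> V"
    using assms by (auto simp: only_vars_def)
  moreover have "Poly_Mapping.keys m \<subseteq> Poly_Mapping.keys (m + uv_monom n a b)"
    by (auto simp: in_keys_iff lookup_add)
  ultimately show "Poly_Mapping.keys m \<subseteq> V"
    by blast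
qed

lemma in_uv_forms_uv_diff:
  assumes "in_uv_forms n e q"
  shows "in_uv_forms n (e - (a + b)) (uv_diff n a b q)"
proof -
  have "mdeg m = e - (a + b)" if "m \<in> Poly_Mapping.keys (uv_diff n a b q)" for m
  proof -
    have "mdeg (m + uv_monom n a b) = e"
      using assms keys_uv_diff[OF that] by (auto simp: in_uv_forms_def homog_of_def)
    then show ?thesis
      by (simp add: mdeg_add)
  qed
  then show ?thesis
    using assms only_vars_uv_diff by (auto simp: in_uv_forms_def homog_of_def)
qed

lemma v_exponent_le_if_in_keys_uv_diff:
  assumes "var_degree_le (n+2) t q" and "m \<in> Poly_Mapping.keys (uv_diff n a b q)"
  shows "Poly_Mapping.lookup m (n+2) + b \<le> t"
proof -
  have "Poly_Mapping.lookup (m + uv_monom n a b) (n+2) \<le> t"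
    using assms(1) keys_uv_diff[OF assms(2)] by (auto simp: var_degree_le_def)
  then show ?thesis
    by (simp add: lookup_add)
qed

lemma var_degree_le_uv_diff:
  assumes "var_degree_le (n+2) t q"
  shows "var_degree_le (n+2) (t - b) (uv_diff n a b q)"
  unfolding var_degree_le_def
proof
  fix m assume "m \<in> Poly_Mapping.keys (uv_diff n a b q)"
  from v_exponent_le_if_in_keys_uv_diff[OF assms this] show "Poly_Mapping.lookup m (n+2) \<le> t - b"
    by simp
qed

lemma uv_diff_eq_0_if_var_degree_le:
  assumes "var_degree_le (n+2) t q" and "t < b"
  shows "uv_diff n a b q = 0"
proof -
  have "Poly_Mapping.keys (uv_diff n a b q) = {}"
    using v_exponent_le_if_in_keys_uv_diff[OF assms(1)] assms(2) by fastforce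
  then show ?thesis
    by simp
qed

text \<open>The only place where characteristic zero is needed: the Pochhammer factors do not vanish.\<close>

lemma lookup_uv_diff_uv_monom_neq_0:
  fixes q :: "'k::field_char_0 mpoly"
  assumes "uv_monom n a' b' \<in> Poly_Mapping.keys q" and "a \<le> a'" and "b \<le> b'"
  shows "Poly_Mapping.lookup (uv_diff n a b q) (uv_monom n (a' - a) (b' - b)) \<noteq> 0"
  using assms by (simp add: lookup_uv_diff uv_monom_add in_keys_iff pochhammer_pos)

section \<open>Binary forms and leading \<open>v\<close>-exponents\<close>

lemma binary_form_key:
  assumes "in_uv_forms n e q" and "m \<in> Poly_Mapping.keys q"
  shows "m = uv_monom n (e - Poly_Mapping.lookup m (n+2)) (Poly_Mapping.lookup m (n+2))
         \<and> Poly_Mapping.lookup m (n+2) \<le> e"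
proof -
  have vars: "Poly_Mapping.keys m \<subseteq> {n+1, n+2}" and "mdeg m = e"
    using assms by (auto simp: in_uv_forms_def only_vars_def homog_of_def)
  then have e: "e = Poly_Mapping.lookup m (n+1) + Poly_Mapping.lookup m (n+2)"
    by (simp add: mdeg_eq_sum[OF _ vars])
  have "m = uv_monom n (e - Poly_Mapping.lookup m (n+2)) (Poly_Mapping.lookup m (n+2))"
    by (rule poly_mapping_eqI) (use vars e in \<open>auto simp: in_keys_iff\<close>)
  then show ?thesis
    using e by simp
qed

lemma binary_form_in_span_monomials:
  assumes "in_uv_forms n e q" and "var_degree_le (n+2) t q"
  shows "q \<in> mpoly.span ((\<lambda>s. Poly_Mapping.single (uv_monom n (e - s) s) 1) ` {..min t e})"
proof -
  have "Poly_Mapping.single m (Poly_Mapping.lookup q m)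
        \<in> mpoly.span ((\<lambda>s. Poly_Mapping.single (uv_monom n (e - s) s) 1) ` {..min t e})"
    if "m \<in> Poly_Mapping.keys q" for m
  proof -
    have "m \<in> (\<lambda>s. uv_monom n (e - s) s) ` {..min t e}"
      using binary_form_key[OF assms(1) that] assms(2) that
      by (auto simp: var_degree_le_def intro!: image_eqI)
    then have "mscale (Poly_Mapping.lookup q m) (Poly_Mapping.single m 1)
        \<in> mpoly.span ((\<lambda>s. Poly_Mapping.single (uv_monom n (e - s) s) 1) ` {..min t e})"
      by (intro mpoly.span_scale mpoly.span_base) auto
    then show ?thesis
      by (simp add: mscale_def)
  qed
  then show ?thesis
    by (subst mpoly_eq_sum_monomials) (rule mpoly.span_sum)
qed

definition v_leading :: "nat \<Rightarrow> nat \<Rightarrow> nat \<Rightarrow> 'k::zero mpoly \<Rightarrow> bool" where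
  "v_leading n e t q \<longleftrightarrow> uv_monom n (e - t) t \<in> Poly_Mapping.keys q \<and> var_degree_le (n+2) t q"

lemma v_leading_le:
  assumes "in_uv_forms n e q" and "v_leading n e t q"
  shows "t \<le> e"
  using binary_form_key[OF assms(1), of "uv_monom n (e - t) t"] assms(2)
  by (simp add: v_leading_def)

lemma binary_form_v_degree_less:
  assumes "in_uv_forms n e q" and "var_degree_le (n+2) t q"
    and "uv_monom n (e - t) t \<notin> Poly_Mapping.keys q"
  shows "\<forall>m\<in>Poly_Mapping.keys q. Poly_Mapping.lookup m (n+2) < t"
proof
  fix m assume m: "m \<in> Poly_Mapping.keys q"
  have "Poly_Mapping.lookup m (n+2) \<noteq> t"
  proof
    assume "Poly_Mapping.lookup m (n+2) = t"
    then have "m = uv_monom n (e - t) t"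
      using binary_form_key[OF assms(1) m] by simp
    with assms(3) m show False
      by simp
  qed
  with assms(2) m show "Poly_Mapping.lookup m (n+2) < t"
    by (simp add: var_degree_le_def le_neq_implies_less)
qed

lemma v_leading_elimination:
  assumes P: "mpoly.subspace P" "\<And>q. q \<in> P \<Longrightarrow> in_uv_forms n e q"
    and q: "q \<in> P" "var_degree_le (n+2) t q"
    and l: "l \<in> P" "v_leading n e t l"
  obtains c where "q - mscale c l \<in> P"
    and "\<forall>m\<in>Poly_Mapping.keys (q - mscale c l). Poly_Mapping.lookup m (n+2) < t"
proof
  let ?\<mu> = "uv_monom n (e - t) t"
  define r where "r = q - mscale (Poly_Mapping.lookup q ?\<mu> / Poly_Mapping.lookup l ?\<mu>) l"
  show r: "r \<in> P"
    unfolding r_def using q(1) l(1) P(1) by (intro mpoly.subspace_diff mpoly.subspace_scale)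
  have "?\<mu> \<notin> Poly_Mapping.keys r"
    using l(2) by (simp add: v_leading_def r_def in_keys_iff lookup_minus)
  moreover have "Poly_Mapping.keys r \<subseteq> Poly_Mapping.keys q \<union> Poly_Mapping.keys l"
    by (auto simp: r_def in_keys_iff lookup_minus)
  then have "var_degree_le (n+2) t r"
    using q(2) l(2) unfolding var_degree_le_def v_leading_def by blast
  ultimately show "\<forall>m\<in>Poly_Mapping.keys r. Poly_Mapping.lookup m (n+2) < t"
    using binary_form_v_degree_less[OF P(2)[OF r]] by blast
qed

lemma in_span_v_leaders_if_v_degree_less:
  assumes P: "mpoly.subspace P" "\<And>q. q \<in> P \<Longrightarrow> in_uv_forms n e q"
    and L: "\<And>t. t \<in> T \<Longrightarrow> L t \<in> P \<and> v_leading n e t (L t)"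
    and T: "T = {t. \<exists>q\<in>P. v_leading n e t q}"
    and "q \<in> P" and "\<forall>m\<in>Poly_Mapping.keys q. Poly_Mapping.lookup m (n+2) < t"
  shows "q \<in> mpoly.span (L ` T)"
  using assms(5,6)
proof (induct t arbitrary: q)
  case 0
  then have "q = 0"
    by simp
  then show ?case
    by (simp add: mpoly.span_zero)
next
  case (Suc t)
  then have q: "q \<in> P" and deg: "var_degree_le (n+2) t q"
    by (auto simp: var_degree_le_def)
  show ?case
  proof (cases "uv_monom n (e - t) t \<in> Poly_Mapping.keys q")
    case False
    with binary_form_v_degree_less[OF P(2)[OF q] deg] show ?thesis
      using Suc.hyps q by blast
  next
    case True
    then have t: "t \<in> T"
      using q deg unfolding T by (auto simp: v_leading_def)
    then have "L t \<in> P" and "v_leading n e t (L t)"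
      using L by auto
    with P q deg obtain c where "q - mscale c (L t) \<in> P"
      and "\<forall>m\<in>Poly_Mapping.keys (q - mscale c (L t)). Poly_Mapping.lookup m (n+2) < t"
      by (rule v_leading_elimination)
    then have "q - mscale c (L t) \<in> mpoly.span (L ` T)"
      by (rule Suc.hyps)
    moreover have "L t \<in> mpoly.span (L ` T)"
      using t by (intro mpoly.span_base) auto
    ultimately have "(q - mscale c (L t)) + mscale c (L t) \<in> mpoly.span (L ` T)"
      by (intro mpoly.span_add mpoly.span_scale)
    then show ?thesis
      by simp
  qed
qed

lemma subspace_subset_span_v_leaders:
  assumes "mpoly.subspace P" and "\<And>q. q \<in> P \<Longrightarrow> in_uv_forms n e q"
    and "\<And>t. t \<in> T \<Longrightarrow> L t \<in> P \<and> v_leading n e t (L t)"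
    and "T = {t. \<exists>q\<in>P. v_leading n e t q}"
  shows "P \<subseteq> mpoly.span (L ` T)"
proof
  fix q assume q: "q \<in> P"
  have "\<forall>m\<in>Poly_Mapping.keys q. Poly_Mapping.lookup m (n+2) < Suc e"
    using binary_form_key[OF assms(2)[OF q]] less_Suc_eq_le by blast
  with q show "q \<in> mpoly.span (L ` T)"
    using in_span_v_leaders_if_v_degree_less[OF assms] by blast
qed

lemma dim_binary_subspace_le:
  assumes "mpoly.subspace P" and "\<And>q. q \<in> P \<Longrightarrow> in_uv_forms n e q"
  shows "mpoly.dim P \<le> card {t. \<exists>q\<in>P. v_leading n e t q}"
proof -
  define T where "T = {t. \<exists>q\<in>P. v_leading n e t q}"
  have "\<forall>t\<in>T. \<exists>q. q \<in> P \<and> v_leading n e t q"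
    by (auto simp: T_def)
  then obtain L where L: "\<And>t. t \<in> T \<Longrightarrow> L t \<in> P \<and> v_leading n e t (L t)"
    using bchoice[of T "\<lambda>t q. q \<in> P \<and> v_leading n e t q"] by blast
  have "T \<subseteq> {..e}"
    using assms(2) by (auto simp: T_def intro: v_leading_le)
  then have "finite T"
    by (rule finite_subset) simp
  from subspace_subset_span_v_leaders[OF assms L T_def]
  have "mpoly.dim P \<le> card (L ` T)"
    using \<open>finite T\<close> by (intro mpoly.dim_le_card) auto
  also have "\<dots> \<le> card T"
    using \<open>finite T\<close> by (rule card_image_le)
  finally show ?thesis
    by (simp add: T_def)
qed

section \<open>The lower bound\<close>

lemma lincomb_eq_0_if_distinct_var_degree:
  fixes w :: "'a \<Rightarrow> 'k::field mpoly" and \<delta> :: "'a \<Rightarrow> nat"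
  assumes "finite I" and "inj_on \<delta> I"
    and deg: "\<And>x. x \<in> I \<Longrightarrow> var_degree_le j (\<delta> x) (w x)"
    and top: "\<And>x. x \<in> I \<Longrightarrow> \<exists>m\<in>Poly_Mapping.keys (w x). Poly_Mapping.lookup m j = \<delta> x"
    and sum0: "(\<Sum>x\<in>I. mscale (c x) (w x)) = 0"
  shows "\<forall>x\<in>I. c x = 0"
proof (rule ccontr)
  define J where "J = {x\<in>I. c x \<noteq> 0}"
  assume "\<not> (\<forall>x\<in>I. c x = 0)"
  then have fin: "finite (\<delta> ` J)" and "\<delta> ` J \<noteq> {}"
    using assms(1) by (auto simp: J_def)
  then have "Max (\<delta> ` J) \<in> \<delta> ` J"
    by (rule Max_in)
  then obtain x1 where x1: "x1 \<in> J" and x1_max: "Max (\<delta> ` J) = \<delta> x1"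
    by (rule imageE)
  have x1I: "x1 \<in> I" and "c x1 \<noteq> 0"
    using x1 by (simp_all add: J_def)
  obtain m where m: "m \<in> Poly_Mapping.keys (w x1)" "Poly_Mapping.lookup m j = \<delta> x1"
    using top[OF x1I] by blast
  have "c x * Poly_Mapping.lookup (w x) m = 0" if x: "x \<in> I - {x1}" for x
  proof (cases "c x = 0")
    case False
    then have "x \<in> J"
      using x by (simp add: J_def)
    then have "\<delta> x \<le> \<delta> x1"
      using Max_ge[OF fin] x1_max by fastforce
    moreover have "\<delta> x \<noteq> \<delta> x1"
      using inj_on_contraD[OF assms(2)] x x1I by blast
    ultimately have "\<delta> x < Poly_Mapping.lookup m j"
      using m(2) by simp
    then show ?thesis
      using lookup_eq_0_if_var_degree_le[OF deg] x by simp
  qed simp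
  then have "(\<Sum>x\<in>I. c x * Poly_Mapping.lookup (w x) m) = (\<Sum>x\<in>{x1}. c x * Poly_Mapping.lookup (w x) m)"
    using assms(1) x1I by (intro sum.mono_neutral_right) auto
  moreover have "(\<Sum>x\<in>I. c x * Poly_Mapping.lookup (w x) m) = 0"
    using arg_cong[OF sum0, of "\<lambda>q. Poly_Mapping.lookup q m"] by (simp add: lookup_sum)
  ultimately show False
    using \<open>c x1 \<noteq> 0\<close> m(1) by (simp add: in_keys_iff)
qed

locale perazzo =
  fixes n d :: nat and p :: "nat \<Rightarrow> 'k::field_char_0 mpoly" and g f :: "'k mpoly"
  assumes p_uv_forms: "\<And>j. j \<le> n \<Longrightarrow> in_uv_forms n (d - 1) (p j)"
    and p_lin_indep: "lin_indep_forms n p"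
    and g_uv_form: "in_uv_forms n d g"
    and f_eq: "f = (\<Sum>j\<le>n. mvar j * p j) + g"
begin

definition p_span :: "'k mpoly set" where
  "p_span = mpoly.span (p ` {..n})"

definition lead_exps :: "nat set" where
  "lead_exps = {t. \<exists>q\<in>p_span. v_leading n (d - 1) t q}"

definition leader :: "nat \<Rightarrow> 'k mpoly" where
  "leader t = (SOME q. q \<in> p_span \<and> v_leading n (d - 1) t q)"

text \<open>Lowering the leading \<open>v\<close>-exponent of \<open>leader t\<close> from \<open>t\<close> to \<open>s\<close> by an order-\<open>k\<close>
  derivative leaves the leading monomial u^(d-1-k-s) v^s.\<close>

definition leader_deriv :: "nat \<Rightarrow> nat \<Rightarrow> nat \<Rightarrow> 'k mpoly" where
  "leader_deriv k t s = uv_diff n (k - (t - s)) (t - s) (leader t)"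

lemma pdiff_f: "j \<notin> {n+1, n+2} \<Longrightarrow> pdiff j f = (if j \<le> n then p j else 0)"
  unfolding f_eq using p_uv_forms g_uv_form by (intro pdiff_perazzo) (auto simp: in_uv_forms_def)

lemma p_span_uv_forms: "q \<in> p_span \<Longrightarrow> in_uv_forms n (d - 1) q"
  unfolding p_span_def by (rule in_uv_forms_span[of "p ` {..n}"]) (use p_uv_forms in blast)+

lemma p_span_subset_span_partials: "p_span \<subseteq> mpoly.span (partials 1 f)"
proof -
  have "p ` {..n} \<subseteq> partials 1 f"
  proof
    fix x assume "x \<in> p ` {..n}"
    then obtain j where "j \<le> n" and "x = p j"
      by auto
    then have "x = pdiff j f"
      using pdiff_f[of j] by simp
    then show "x \<in> partials 1 f"
      by auto
  qed
  then show ?thesis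
    unfolding p_span_def by (rule mpoly.span_mono)
qed

lemma leader_spec: "t \<in> lead_exps \<Longrightarrow> leader t \<in> p_span \<and> v_leading n (d - 1) t (leader t)"
  unfolding lead_exps_def leader_def by (rule someI_ex) auto

lemma lead_exps_subset: "lead_exps \<subseteq> {..d - 1}"
  unfolding lead_exps_def using v_leading_le[OF p_span_uv_forms] by blast

lemma finite_lead_exps: "finite lead_exps"
  using lead_exps_subset by (rule finite_subset) simp

lemma card_lead_exps: "n + 1 \<le> card lead_exps"
proof -
  have "card {..n} \<le> mpoly.dim (p ` {..n})"
  proof (rule mpoly.card_le_dim_if_independent_family)
    fix c assume "(\<Sum>x\<in>{..n}. mscale (c x) (p x)) = 0"
    then show "\<forall>x\<in>{..n}. c x = 0"
      using p_lin_indep by (simp add: lin_indep_forms_def mconst_mult)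
  qed (auto intro: mpoly.span_base)
  also have "\<dots> = mpoly.dim p_span"
    by (simp add: p_span_def)
  also have "\<dots> \<le> card lead_exps"
    unfolding lead_exps_def
    by (rule dim_binary_subspace_le[OF _ p_span_uv_forms]) (simp add: p_span_def)
  finally show ?thesis
    by simp
qed

lemma leader_deriv_leading:
  assumes "t \<in> lead_exps" and "s \<le> t" and "t \<le> s + k" and "s + k < d"
  shows "var_degree_le (n+2) s (leader_deriv k t s)"
    and "uv_monom n (d - 1 - k - s) s \<in> Poly_Mapping.keys (leader_deriv k t s)"
proof -
  have lt: "uv_monom n (d - 1 - t) t \<in> Poly_Mapping.keys (leader t)" "var_degree_le (n+2) t (leader t)"
    using leader_spec[OF assms(1)] by (auto simp: v_leading_def)
  from var_degree_le_uv_diff[OF lt(2), of "t - s" "k - (t - s)"]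
  show "var_degree_le (n+2) s (leader_deriv k t s)"
    using assms(2) by (simp add: leader_deriv_def)
  have "Poly_Mapping.lookup (leader_deriv k t s)
      (uv_monom n (d - 1 - t - (k - (t - s))) (t - (t - s))) \<noteq> 0"
    unfolding leader_deriv_def using assms by (intro lookup_uv_diff_uv_monom_neq_0[OF lt(1)]) auto
  moreover have "d - 1 - t - (k - (t - s)) = d - 1 - k - s" and "t - (t - s) = s"
    using assms by auto
  ultimately show "uv_monom n (d - 1 - k - s) s \<in> Poly_Mapping.keys (leader_deriv k t s)"
    by (simp add: in_keys_iff)
qed

lemma lincomb_leader_derivs_eq_0:
  assumes "finite S"
    and \<tau>: "\<And>s. s \<in> S \<Longrightarrow> \<tau> s \<in> lead_exps \<and> s \<le> \<tau> s \<and> \<tau> s \<le> s + k \<and> s + k < d"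
    and "(\<Sum>s\<in>S. mscale (c s) (leader_deriv k (\<tau> s) s)) = 0"
  shows "\<forall>s\<in>S. c s = 0"
proof (rule lincomb_eq_0_if_distinct_var_degree
    [where \<delta> = id and j = "n+2" and w = "\<lambda>s. leader_deriv k (\<tau> s) s"])
  fix s assume "s \<in> S"
  note lead = leader_deriv_leading[of "\<tau> s" s k] \<tau>[OF \<open>s \<in> S\<close>]
  then show "var_degree_le (n+2) (id s) (leader_deriv k (\<tau> s) s)"
    by simp
  show "\<exists>m\<in>Poly_Mapping.keys (leader_deriv k (\<tau> s) s). Poly_Mapping.lookup m (n+2) = id s"
    using lead by (intro bexI[of _ "uv_monom n (d - 1 - k - s) s"]) auto
qed (use assms in auto)

lemma lincomb_uv_diff_vanishes_on_p_span:
  assumes "\<And>j. j \<le> n \<Longrightarrow> (\<Sum>b\<in>B. mscale (c b) (uv_diff n (i - b) b (p j))) = 0"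
    and "q \<in> p_span"
  shows "(\<Sum>b\<in>B. mscale (c b) (uv_diff n (i - b) b q)) = 0"
  using assms(2) unfolding p_span_def
proof (induct rule: mpoly.span_induct_alt)
  case (step a x y)
  then obtain j where "j \<le> n" and "x = p j"
    by auto
  have "(\<Sum>b\<in>B. mscale (c b) (uv_diff n (i - b) b (mscale a x + y)))
      = mscale a (\<Sum>b\<in>B. mscale (c b) (uv_diff n (i - b) b x))
        + (\<Sum>b\<in>B. mscale (c b) (uv_diff n (i - b) b y))"
    by (simp add: uv_diff_add uv_diff_mscale mpoly.scale_right_distrib mpoly.scale_sum_right
        sum.distrib mpoly.scale_scale mult.commute)
  then show ?case
    using step(2) assms(1)[OF \<open>j \<le> n\<close>] \<open>x = p j\<close> by (simp add: mpoly.scale_zero_right)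
qed (simp add: mpoly.scale_zero_right)

lemma lincomb_leader_uv_diffs_eq_0:
  assumes "finite K" and "t \<in> lead_exps"
    and K: "\<And>b. b \<in> K \<Longrightarrow> b \<le> t \<and> i - b \<le> d - 1 - t"
    and "(\<Sum>b\<in>K. mscale (c b) (uv_diff n (i - b) b (leader t))) = 0"
  shows "\<forall>b\<in>K. c b = 0"
proof (rule lincomb_eq_0_if_distinct_var_degree[where \<delta> = "\<lambda>b. t - b" and j = "n+2"])
  have lt: "uv_monom n (d - 1 - t) t \<in> Poly_Mapping.keys (leader t)"
    "var_degree_le (n+2) t (leader t)"
    using leader_spec[OF assms(2)] by (auto simp: v_leading_def)
  show "inj_on (\<lambda>b. t - b) K"
  proof (rule inj_onI)
    fix x y assume "x \<in> K" and "y \<in> K" and "t - x = t - y"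
    then show "x = y"
      using K[of x] K[of y] by auto
  qed
  fix b assume "b \<in> K"
  show "var_degree_le (n+2) (t - b) (uv_diff n (i - b) b (leader t))"
    by (rule var_degree_le_uv_diff[OF lt(2)])
  from lookup_uv_diff_uv_monom_neq_0[OF lt(1)] K[OF \<open>b \<in> K\<close>]
  show "\<exists>m\<in>Poly_Mapping.keys (uv_diff n (i - b) b (leader t)). Poly_Mapping.lookup m (n+2) = t - b"
    by (intro bexI[of _ "uv_monom n (d - 1 - t - (i - b)) (t - b)"]) (auto simp: in_keys_iff)
qed (use assms in auto)

lemma lincomb_f_derivs_eq_0:
  assumes "finite B" and "i < d"
    and B: "\<And>b. b \<in> B \<Longrightarrow> b \<le> i \<and> (\<exists>t\<in>lead_exps. b \<le> t \<and> t \<le> b + (d - 1 - i))"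
    and rel: "\<And>j. j \<le> n \<Longrightarrow> (\<Sum>b\<in>B. mscale (c b) (uv_diff n (i - b) b (p j))) = 0"
  shows "\<forall>b\<in>B. c b = 0"
proof (rule ccontr)
  define J where "J = {b\<in>B. c b \<noteq> 0}"
  assume "\<not> (\<forall>b\<in>B. c b = 0)"
  then have "finite J" and "J \<noteq> {}"
    using assms(1) by (auto simp: J_def)
  define b1 where "b1 = Min J"
  have b1: "b1 \<in> J" and b1_min: "\<And>b. b \<in> J \<Longrightarrow> b1 \<le> b"
    unfolding b1_def using \<open>finite J\<close> \<open>J \<noteq> {}\<close> by (auto intro: Min_in)
  then obtain t where t: "t \<in> lead_exps" "b1 \<le> t" "t \<le> b1 + (d - 1 - i)" and "b1 \<le> i"
    using B by (auto simp: J_def)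
  have lt: "leader t \<in> p_span" "var_degree_le (n+2) t (leader t)"
    using leader_spec[OF t(1)] by (auto simp: v_leading_def)
  define K where "K = {b\<in>J. b \<le> t}"
  have "(\<Sum>b\<in>K. mscale (c b) (uv_diff n (i - b) b (leader t))) =
      (\<Sum>b\<in>B. mscale (c b) (uv_diff n (i - b) b (leader t)))"
  proof (rule sum.mono_neutral_left)
    show "\<forall>b\<in>B - K. mscale (c b) (uv_diff n (i - b) b (leader t)) = 0"
    proof
      fix b assume "b \<in> B - K"
      then have "c b = 0 \<or> t < b"
        by (auto simp: K_def J_def)
      then show "mscale (c b) (uv_diff n (i - b) b (leader t)) = 0"
        using uv_diff_eq_0_if_var_degree_le[OF lt(2)]
        by (auto simp: mpoly.scale_zero_left mpoly.scale_zero_right)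
    qed
  qed (use assms(1) in \<open>auto simp: K_def J_def\<close>)
  also have "\<dots> = 0"
    using lincomb_uv_diff_vanishes_on_p_span[OF rel lt(1)] .
  finally have sum0: "(\<Sum>b\<in>K. mscale (c b) (uv_diff n (i - b) b (leader t))) = 0" .
  have K: "b \<le> t \<and> i - b \<le> d - 1 - t" if "b \<in> K" for b
  proof -
    have "b1 \<le> b" and "b \<le> t"
      using that b1_min by (auto simp: K_def)
    then show ?thesis
      using t(3) \<open>b1 \<le> i\<close> assms(2) by linarith
  qed
  have "finite K"
    using assms(1) by (simp add: K_def J_def)
  from lincomb_leader_uv_diffs_eq_0[OF this t(1) K sum0]
  have "\<forall>b\<in>K. c b = 0" .
  then show False
    using b1 t(2) by (auto simp: K_def J_def)
qed

lemma leader_deriv_in_span_partials: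
  assumes "t \<in> lead_exps" and "s \<le> t" and "t \<le> s + (i - 1)" and "1 \<le> i"
  shows "leader_deriv (i - 1) t s \<in> mpoly.span (partials i f)"
proof -
  have "leader t \<in> mpoly.span (partials 1 f)"
    using leader_spec[OF assms(1)] p_span_subset_span_partials by blast
  moreover have "1 + (t - s) + (i - 1 - (t - s)) = i"
    using assms by linarith
  ultimately show ?thesis
    unfolding leader_deriv_def by (metis uv_diff_in_span_partials)
qed

lemma uv_diff_f_in_span_partials:
  assumes "b \<le> i"
  shows "uv_diff n (i - b) b f \<in> mpoly.span (partials i f)"
proof -
  have "f \<in> mpoly.span (partials 0 f)"
    by (simp add: mpoly.span_base)
  moreover have "0 + b + (i - b) = i"
    using assms by simp
  ultimately show ?thesis
    by (metis uv_diff_in_span_partials)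
qed

lemma lincomb_lower_families_eq_0:
  assumes "finite S" and "finite B" and "1 \<le> i" and "i < d"
    and \<tau>: "\<And>s. s \<in> S \<Longrightarrow> \<tau> s \<in> lead_exps \<and> s \<le> \<tau> s \<and> \<tau> s \<le> s + (i - 1) \<and> s \<le> d - i"
    and B: "\<And>b. b \<in> B \<Longrightarrow> b \<le> i \<and> (\<exists>t\<in>lead_exps. b \<le> t \<and> t \<le> b + (d - 1 - i))"
    and rel: "(\<Sum>s\<in>S. mscale (a s) (leader_deriv (i - 1) (\<tau> s) s)) +
              (\<Sum>b\<in>B. mscale (c b) (uv_diff n (i - b) b f)) = 0"
  shows "(\<forall>s\<in>S. a s = 0) \<and> (\<forall>b\<in>B. c b = 0)"
proof -
  have c0: "\<forall>b\<in>B. c b = 0"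
  proof (rule lincomb_f_derivs_eq_0[OF assms(2,4) B])
    fix j assume "j \<le> n"
    then have j: "j \<notin> {n+1, n+2}"
      by auto
    have "pdiff j (leader_deriv (i - 1) (\<tau> s) s) = 0" if "s \<in> S" for s
    proof -
      have "only_vars {n+1, n+2} (leader (\<tau> s))"
        using leader_spec \<tau>[OF that] p_span_uv_forms by (auto simp: in_uv_forms_def)
      then show ?thesis
        unfolding leader_deriv_def by (intro pdiff_eq_0_if_only_vars[OF only_vars_uv_diff j])
    qed
    then have "pdiff j ((\<Sum>s\<in>S. mscale (a s) (leader_deriv (i - 1) (\<tau> s) s)) +
        (\<Sum>b\<in>B. mscale (c b) (uv_diff n (i - b) b f))) =
        (\<Sum>b\<in>B. mscale (c b) (uv_diff n (i - b) b (p j)))"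
      using \<open>j \<le> n\<close> j by (simp add: pdiff_add pdiff_sum pdiff_mscale pdiff_uv_diff pdiff_f
          mpoly.scale_zero_right)
    then show "(\<Sum>b\<in>B. mscale (c b) (uv_diff n (i - b) b (p j))) = 0"
      using rel by simp
  qed
  then have "(\<Sum>s\<in>S. mscale (a s) (leader_deriv (i - 1) (\<tau> s) s)) = 0"
    using rel by (simp add: mpoly.scale_zero_left)
  moreover have "\<tau> s \<in> lead_exps \<and> s \<le> \<tau> s \<and> \<tau> s \<le> s + (i - 1) \<and> s + (i - 1) < d"
    if "s \<in> S" for s
    using \<tau>[OF that] assms(3,4) by auto
  ultimately have "\<forall>s\<in>S. a s = 0"
    using lincomb_leader_derivs_eq_0[OF assms(1)] by blast
  with c0 show ?thesis
    by blast
qed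

theorem hvec_lower_bound:
  assumes "1 \<le> i" and "i < d"
  shows "min (n + 1) (d - i + 1) + min (n + 1) (i + 1) \<le> hvec f i"
proof -
  define S where "S = {s. s \<le> d - i \<and> (\<exists>t\<in>lead_exps. s \<le> t \<and> t \<le> s + (i - 1))}"
  define B where "B = {b. b \<le> i \<and> (\<exists>t\<in>lead_exps. b \<le> t \<and> t \<le> b + (d - 1 - i))}"
  have "d - 1 - (d - i) = i - 1"
    using assms by simp
  then have card_S: "min (card lead_exps) (d - i + 1) \<le> card S"
    using card_hit_windows_ge[OF finite_lead_exps lead_exps_subset, of "d - i"] assms
    by (simp add: S_def)
  have card_B: "min (card lead_exps) (i + 1) \<le> card B"
    unfolding B_def using assms by (intro card_hit_windows_ge[OF finite_lead_exps lead_exps_subset]) simp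
  obtain \<tau> where \<tau>: "\<And>s. s \<in> S \<Longrightarrow> \<tau> s \<in> lead_exps \<and> s \<le> \<tau> s \<and> \<tau> s \<le> s + (i - 1)"
    using bchoice[of S "\<lambda>s t. t \<in> lead_exps \<and> s \<le> t \<and> t \<le> s + (i - 1)"] by (auto simp: S_def)
  have "card S + card B \<le> mpoly.dim (partials i f)"
  proof (rule mpoly.card_add_card_le_dim_if_independent_families[OF finite_partials])
    show "finite S" and "finite B"
      by (auto simp: S_def B_def)
    show "(\<lambda>s. leader_deriv (i - 1) (\<tau> s) s) ` S \<subseteq> mpoly.span (partials i f)"
    proof clarify
      fix s assume "s \<in> S"
      with \<tau> assms(1) show "leader_deriv (i - 1) (\<tau> s) s \<in> mpoly.span (partials i f)"
        by (intro leader_deriv_in_span_partials) auto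
    qed
    show "(\<lambda>b. uv_diff n (i - b) b f) ` B \<subseteq> mpoly.span (partials i f)"
      by (auto simp: B_def intro: uv_diff_f_in_span_partials)
    fix a c
    assume "(\<Sum>s\<in>S. mscale (a s) (leader_deriv (i - 1) (\<tau> s) s)) +
            (\<Sum>b\<in>B. mscale (c b) (uv_diff n (i - b) b f)) = 0"
    then show "(\<forall>s\<in>S. a s = 0) \<and> (\<forall>b\<in>B. c b = 0)"
      using \<tau> assms by (intro lincomb_lower_families_eq_0) (auto simp: S_def B_def)
  qed
  moreover have "min (n + 1) (d - i + 1) \<le> min (card lead_exps) (d - i + 1)"
    and "min (n + 1) (i + 1) \<le> min (card lead_exps) (i + 1)"
    using card_lead_exps by (auto intro: min.mono)
  ultimately show ?thesis
    using card_S card_B by (simp add: hvec_def)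
qed

end

section \<open>The upper bound\<close>

locale v_bounded_perazzo = perazzo n d p g f
  for n d :: nat and p :: "nat \<Rightarrow> 'k::field_char_0 mpoly" and g f +
  assumes p_v_degree: "\<And>j. j \<le> n \<Longrightarrow> var_degree_le (n+2) n (p j)"
    and g_v_degree: "var_degree_le (n+2) n g"
begin

definition low_forms :: "nat \<Rightarrow> 'k mpoly set" where
  "low_forms i = {q. in_uv_forms n (d - i) q \<and> var_degree_le (n+2) n q}"

definition f_derivs :: "nat \<Rightarrow> 'k mpoly set" where
  "f_derivs i = (\<lambda>b. uv_diff n (i - b) b f) ` {..min n i}"

lemma uv_diff_f_in_f_derivs: "b \<le> n \<Longrightarrow> b \<le> i \<Longrightarrow> uv_diff n (i - b) b f \<in> f_derivs i"
  by (auto simp: f_derivs_def)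

lemma f_v_degree: "var_degree_le (n+2) n f"
  unfolding f_eq using p_v_degree g_v_degree
  by (intro var_degree_le_add var_degree_le_sum var_degree_le_mvar_mult) auto

lemma pdiff_low_forms: "q \<in> low_forms i \<Longrightarrow> pdiff j q \<in> low_forms (Suc i)"
  using in_uv_forms_pdiff[of n "d - i" q j] var_degree_le_pdiff[of "n+2" n q j]
  by (simp add: low_forms_def)

lemma uv_diff_p_in_low_forms:
  assumes "j \<le> n" and "b \<le> i"
  shows "uv_diff n (i - b) b (p j) \<in> low_forms (Suc i)"
proof -
  have "in_uv_forms n (d - 1 - (i - b + b)) (uv_diff n (i - b) b (p j))"
    using p_uv_forms[OF assms(1)] by (rule in_uv_forms_uv_diff)
  moreover have "var_degree_le (n+2) (n - b) (uv_diff n (i - b) b (p j))"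
    using p_v_degree[OF assms(1)] by (rule var_degree_le_uv_diff)
  ultimately show ?thesis
    using assms(2) by (auto simp: low_forms_def elim: var_degree_le_mono)
qed

lemma pdiff_f_derivs:
  assumes "x \<in> f_derivs i"
  shows "pdiff j x \<in> mpoly.span (low_forms (Suc i) \<union> f_derivs (Suc i))"
proof -
  obtain b where b: "b \<le> n" "b \<le> i" and x: "x = uv_diff n (i - b) b f"
    using assms by (auto simp: f_derivs_def)
  consider "j = n+1" | "j = n+2" | "j \<notin> {n+1, n+2}"
    by blast
  then show ?thesis
  proof cases
    case 1
    then have "pdiff j x = uv_diff n (Suc i - b) b f"
      using b pdiff_u_uv_diff[of n "i - b" b f] by (simp add: x Suc_diff_le)
    then show ?thesis
      using b uv_diff_f_in_f_derivs[of b "Suc i"] by (simp add: mpoly.span_base)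
  next
    case 2
    then have px: "pdiff j x = uv_diff n (Suc i - Suc b) (Suc b) f"
      using pdiff_v_uv_diff[of n "i - b" b f] by (simp add: x)
    show ?thesis
    proof (cases "b = n")
      case True
      then have "pdiff j x = 0"
        using px uv_diff_eq_0_if_var_degree_le[OF f_v_degree] by simp
      then show ?thesis
        by (simp add: mpoly.span_zero)
    next
      case False
      then show ?thesis
        using b px uv_diff_f_in_f_derivs[of "Suc b" "Suc i"] by (simp add: mpoly.span_base)
    qed
  next
    case 3
    then have "pdiff j x = (if j \<le> n then uv_diff n (i - b) b (p j) else 0)"
      by (simp add: x pdiff_uv_diff pdiff_f)
    then show ?thesis
      using uv_diff_p_in_low_forms[OF _ b(2), of j]
      by (auto simp: mpoly.span_zero intro: mpoly.span_base)
  qed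
qed

lemma partials_subset_span: "partials i f \<subseteq> mpoly.span (low_forms i \<union> f_derivs i)"
proof (induct i)
  case 0
  have "f \<in> f_derivs 0"
    using uv_diff_f_in_f_derivs[of 0 0] by (simp add: uv_diff_def)
  then show ?case
    by (auto intro: mpoly.span_base)
next
  case (Suc i)
  have "pdiff j ` (low_forms i \<union> f_derivs i) \<subseteq> mpoly.span (low_forms (Suc i) \<union> f_derivs (Suc i))"
    for j
    using pdiff_low_forms pdiff_f_derivs by (auto intro: mpoly.span_base)
  then have "mpoly.span (pdiff j ` (low_forms i \<union> f_derivs i))
      \<subseteq> mpoly.span (low_forms (Suc i) \<union> f_derivs (Suc i))" for j
    by (rule mpoly.span_minimal) (rule mpoly.subspace_span)
  then show ?case
    using Suc pdiff_in_span_image by fastforce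
qed

theorem hvec_upper_bound: "hvec f i \<le> min (n + 1) (d - i + 1) + min (n + 1) (i + 1)"
proof -
  define M where "M = (\<lambda>s. Poly_Mapping.single (uv_monom n (d - i - s) s) (1::'k)) ` {..min n (d - i)}"
  have "low_forms i \<subseteq> mpoly.span M"
  proof
    fix q assume "q \<in> low_forms i"
    then show "q \<in> mpoly.span M"
      unfolding M_def low_forms_def by (intro binary_form_in_span_monomials) simp_all
  qed
  then have "low_forms i \<union> f_derivs i \<subseteq> mpoly.span (M \<union> f_derivs i)"
    using mpoly.span_mono[of M "M \<union> f_derivs i"] by (auto intro: mpoly.span_base)
  then have "mpoly.span (low_forms i \<union> f_derivs i) \<subseteq> mpoly.span (M \<union> f_derivs i)"
    by (rule mpoly.span_minimal) (rule mpoly.subspace_span)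
  then have "hvec f i \<le> card (M \<union> f_derivs i)"
    using partials_subset_span unfolding hvec_def
    by (intro mpoly.dim_le_card) (auto simp: M_def f_derivs_def)
  also have "\<dots> \<le> card M + card (f_derivs i)"
    by (rule card_Un_le)
  also have "card M \<le> min n (d - i) + 1"
    unfolding M_def by (rule order.trans[OF card_image_le]) auto
  also have "card (f_derivs i) \<le> min n i + 1"
    unfolding f_derivs_def by (rule order.trans[OF card_image_le]) auto
  finally show ?thesis
    by simp
qed

end

section \<open>The example\<close>

lemma mvar_power: "(mvar a :: 'k::comm_ring_1 mpoly) ^ k = Poly_Mapping.single (Poly_Mapping.single a k) 1"
  by (induct k) (simp_all add: mvar_def mult_single single_add[symmetric] del: single_add)

definition monomial_forms :: "nat \<Rightarrow> nat \<Rightarrow> nat \<Rightarrow> 'k::comm_ring_1 mpoly" where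
  "monomial_forms n d j = mvar (n+1) ^ (d - 1 - j) * mvar (n+2) ^ j"

lemma monomial_forms_eq: "monomial_forms n d j = Poly_Mapping.single (uv_monom n (d - 1 - j) j) 1"
  by (simp add: monomial_forms_def mvar_power mult_single uv_monom_def)

lemma v_bounded_perazzo_monomial_forms:
  assumes "n < d"
  shows "v_bounded_perazzo n d (monomial_forms n d :: nat \<Rightarrow> 'k::field_char_0 mpoly) 0
           (\<Sum>j\<le>n. mvar j * mvar (n+1) ^ (d - 1 - j) * mvar (n+2) ^ j)"
proof unfold_locales
  fix j assume "j \<le> n"
  have "Poly_Mapping.keys (uv_monom n a b) \<subseteq> {n+1, n+2}" for a b
    by (auto simp: in_keys_iff split: if_splits)
  then show "in_uv_forms n (d - 1) (monomial_forms n d j :: 'k mpoly)"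
    using \<open>j \<le> n\<close> assms
    by (simp add: monomial_forms_eq in_uv_forms_def only_vars_def homog_of_def)
  show "var_degree_le (n+2) n (monomial_forms n d j :: 'k mpoly)"
    using \<open>j \<le> n\<close> by (simp add: monomial_forms_eq var_degree_le_def)
next
  show "lin_indep_forms n (monomial_forms n d :: nat \<Rightarrow> 'k mpoly)"
    unfolding lin_indep_forms_def
  proof (intro allI impI)
    fix c :: "nat \<Rightarrow> 'k" and j
    assume rel: "(\<Sum>k\<le>n. mconst (c k) * monomial_forms n d k) = 0" and "j \<le> n"
    have "mconst (c k) * monomial_forms n d k = Poly_Mapping.single (uv_monom n (d - 1 - k) k) (c k)" for k
      by (simp add: monomial_forms_eq mconst_def mult_single)
    then have "0 = (\<Sum>k\<le>n. Poly_Mapping.lookup (Poly_Mapping.single (uv_monom n (d - 1 - k) k) (c k))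
        (uv_monom n (d - 1 - j) j))"
      using arg_cong[OF rel, of "\<lambda>q. Poly_Mapping.lookup q (uv_monom n (d - 1 - j) j)"]
      by (simp add: lookup_sum)
    also have "\<dots> = (\<Sum>k\<le>n. if k = j then c j else 0)"
      by (intro sum.cong) (auto simp: lookup_single when_def)
    finally show "c j = 0"
      using \<open>j \<le> n\<close> by simp
  qed
next
  show "(\<Sum>j\<le>n. mvar j * mvar (n+1) ^ (d - 1 - j) * mvar (n+2) ^ j) =
        (\<Sum>j\<le>n. mvar j * monomial_forms n d j) + (0 :: 'k mpoly)"
    by (simp add: monomial_forms_def mult.assoc)
qed simp_all

lemma alg_dep_monomial_forms:
  assumes "2 \<le> n" and "n < d"
  shows "alg_dep_forms n (monomial_forms n d :: nat \<Rightarrow> 'k::field mpoly)"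
  unfolding alg_dep_forms_def
proof (intro exI conjI)
  define m1 :: "nat \<Rightarrow>\<^sub>0 nat" where "m1 = Poly_Mapping.single 0 1 + Poly_Mapping.single 2 1"
  define m2 :: "nat \<Rightarrow>\<^sub>0 nat" where "m2 = Poly_Mapping.single 1 2"
  define F :: "'k mpoly" where "F = Poly_Mapping.single m1 1 - Poly_Mapping.single m2 1"
  have "Poly_Mapping.lookup m1 0 \<noteq> Poly_Mapping.lookup m2 0"
    by (simp add: m1_def m2_def lookup_add lookup_single)
  then have "m1 \<noteq> m2"
    by auto
  then have lookup_F: "Poly_Mapping.lookup F m = (if m = m1 then 1 else if m = m2 then -1 else 0)" for m
    by (auto simp: F_def lookup_minus lookup_single when_def)
  then have keys_F: "Poly_Mapping.keys F = {m1, m2}"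
    by (auto simp: in_keys_iff split: if_splits)
  then show "F \<noteq> 0"
    by auto
  have keys_m1: "Poly_Mapping.keys m1 = {0, 2}" and keys_m2: "Poly_Mapping.keys m2 = {1}"
    by (auto simp: m1_def m2_def in_keys_iff lookup_add lookup_single when_def split: if_splits)
  show "only_vars {..n} F"
    unfolding only_vars_def keys_F using keys_m1 keys_m2 assms(1) by auto
  have "d - 1 - 0 + (d - 1 - 2) = d - 1 - 1 + (d - 1 - 1)"
    using assms by simp
  then have square: "monomial_forms n d 0 * monomial_forms n d 2 = (monomial_forms n d 1 ^ 2 :: 'k mpoly)"
    by (simp add: monomial_forms_eq power2_eq_square mult_single uv_monom_add)
  have "msubst (monomial_forms n d) F =
      mconst 1 * (monomial_forms n d 0 * monomial_forms n d 2) + mconst (-1) * monomial_forms n d 1 ^ 2"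
    using \<open>m1 \<noteq> m2\<close> by (simp add: msubst_def keys_F lookup_F keys_m1 keys_m2)
      (simp add: m1_def m2_def lookup_add lookup_single)
  also have "\<dots> = 0"
    unfolding square by (rule poly_mapping_eqI) (simp add: mconst_mult lookup_add)
  finally show "msubst (monomial_forms n d) F = 0" .
qed

lemma min_add_min_eq:
  fixes n d i :: nat
  assumes "i \<le> d div 2"
  shows "min (n + 1) (d - i + 1) + min (n + 1) (i + 1) = min (2*n+2) (min (d+2) (n+2+i))"
  using assms by (simp add: min_def) arith

lemma perazzo_form_hvec_lower_bound:
  fixes f :: "'k::field_char_0 mpoly"
  assumes "perazzo_form n d f" and "1 \<le> i" and "i < d"
  shows "min (n + 1) (d - i + 1) + min (n + 1) (i + 1) \<le> hvec f i"
proof -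
  obtain p g where "\<And>j. j \<le> n \<Longrightarrow> in_uv_forms n (d - 1) (p j)" and "lin_indep_forms n p"
    and "in_uv_forms n d g" and "f = (\<Sum>j\<le>n. mvar j * p j) + g"
    using assms(1) unfolding perazzo_form_def by blast
  then interpret perazzo n d p g f
    by unfold_locales
  show ?thesis
    using assms(2,3) by (rule hvec_lower_bound)
qed

lemma perazzo_form_example:
  assumes "2 \<le> n" and "n < d"
  shows "perazzo_form n d
           ((\<Sum>j\<le>n. mvar j * mvar (n+1) ^ (d-1-j) * mvar (n+2) ^ j) :: 'k::field_char_0 mpoly)"
proof -
  interpret v_bounded_perazzo n d "monomial_forms n d" 0
    "(\<Sum>j\<le>n. mvar j * mvar (n+1) ^ (d-1-j) * mvar (n+2) ^ j) :: 'k mpoly"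
    using assms(2) by (rule v_bounded_perazzo_monomial_forms)
  show ?thesis
    unfolding perazzo_form_def using p_uv_forms p_lin_indep alg_dep_monomial_forms[OF assms]
      g_uv_form f_eq by blast
qed

lemma hvec_example:
  assumes "n < d" and "1 \<le> i" and "i < d"
  shows "hvec ((\<Sum>j\<le>n. mvar j * mvar (n+1) ^ (d-1-j) * mvar (n+2) ^ j) :: 'k::field_char_0 mpoly) i
           = min (n + 1) (d - i + 1) + min (n + 1) (i + 1)"
proof -
  interpret v_bounded_perazzo n d "monomial_forms n d" 0
    "(\<Sum>j\<le>n. mvar j * mvar (n+1) ^ (d-1-j) * mvar (n+2) ^ j) :: 'k mpoly"
    using assms(1) by (rule v_bounded_perazzo_monomial_forms)
  show ?thesis
    using hvec_lower_bound[OF assms(2,3)] hvec_upper_bound[of i] by linarith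
qed

theorem theorem3p4:
  fixes n d :: nat
  assumes "alg_closed TYPE('k::field_char_0)"
    and "n \<ge> 2" and "d \<ge> n + 1"
  shows "(\<forall>f::'k mpoly. perazzo_form n d f \<longrightarrow>
            (\<forall>i. 1 \<le> i \<and> i \<le> d div 2 \<longrightarrow>
                 min (2*n+2) (min (d+2) (n+2+i)) \<le> hvec f i))
       \<and> perazzo_form n d
           ((\<Sum>j\<le>n. mvar j * mvar (n+1) ^ (d-1-j) * mvar (n+2) ^ j) :: 'k mpoly)
       \<and> (\<forall>i. 1 \<le> i \<and> i \<le> d div 2 \<longrightarrow>
            hvec ((\<Sum>j\<le>n. mvar j * mvar (n+1) ^ (d-1-j) * mvar (n+2) ^ j) :: 'k mpoly) i
              = min (2*n+2) (min (d+2) (n+2+i)))"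
proof -
  have "n < d"
    using assms(3) by simp
  have i_less: "i < d" if "1 \<le> i \<and> i \<le> d div 2" for i
    using that by presburger
  show ?thesis
  proof (intro conjI allI impI)
    fix f :: "'k mpoly" and i
    assume "perazzo_form n d f" and i: "1 \<le> i \<and> i \<le> d div 2"
    with i_less[OF i] show "min (2*n+2) (min (d+2) (n+2+i)) \<le> hvec f i"
      using perazzo_form_hvec_lower_bound[of n d f i] min_add_min_eq[of i d n] by simp
  next
    show "perazzo_form n d ((\<Sum>j\<le>n. mvar j * mvar (n+1) ^ (d-1-j) * mvar (n+2) ^ j) :: 'k mpoly)"
      using assms(2) \<open>n < d\<close> by (rule perazzo_form_example)
  next
    fix i assume i: "1 \<le> i \<and> i \<le> d div 2"
    with i_less[OF i] show "hvec ((\<Sum>j\<le>n. mvar j * mvar (n+1) ^ (d-1-j) * mvar (n+2) ^ j) :: 'k mpoly) i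
              = min (2*n+2) (min (d+2) (n+2+i))"
      using hvec_example[OF \<open>n < d\<close>, of i] min_add_min_eq[of i d n] by simp
  qed
qed

end
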